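(* Let $\lambda=2\cos(\pi/5)$, $\pi=\lambda+2$, and work in $GL(2,\mathbb Z[\lambda]/5\mathbb Z[\lambda])$. Let $$a=I+\pi\begin{pmatrix}4&0\\4&1\end{pmatrix},\quad b=I+\pi\begin{pmatrix}1&1\\0&4\end{pmatrix},\quad c=I+\pi\begin{pmatrix}1&4\\0&4\end{pmatrix}$$ (entries taken modulo $5$), and let $\Delta=\{a,b,c\}$. Let $S=\begin{pmatrix}0&1\\-1&0\end{pmatrix}$, $T=\begin{pmatrix}1&\lambda\\0&1\end{pmatrix}$, $J=\begin{pmatrix}0&1\\1&0\end{pmatrix}$ (reduced modulo $5$). Then the only nontrivial subgroup of $\langle\Delta\rangle$ that is invariant under conjugation by each of $S$, $T$ and $J$ is $\langle\Delta\rangle$ itself.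
   Context: $\lambda=2\cos(\pi/5)$ satisfies $\lambda^2=\lambda+1$; $\mathbb Z[\lambda]$ is the ring of integers of $\mathbb Q(\sqrt5)$, and $5=(\lambda+2)^2\lambda^{-2}$ in $\mathbb Z[\lambda]$. *)

theory Defs
  imports "HOL-Algebra.Generated_Groups"
begin

text \<open>The ring Z[lambda]/5Z[lambda], lambda^2 = lambda + 1. Since Z[lambda] = Z + Z lambda,
  an element x + y lambda is represented by the pair (x mod 5, y mod 5).\<close>

type_synonym zl = "int \<times> int"

definition zl_norm :: "zl \<Rightarrow> zl" where
  "zl_norm p = (fst p mod 5, snd p mod 5)"

definition zl_add :: "zl \<Rightarrow> zl \<Rightarrow> zl" where
  "zl_add p q = zl_norm (fst p + fst q, snd p + snd q)"

definition zl_mul :: "zl \<Rightarrow> zl \<Rightarrow> zl" where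
  "zl_mul p q = zl_norm (fst p * fst q + snd p * snd q,
                         fst p * snd q + snd p * fst q + snd p * snd q)"

definition zl_of_int :: "int \<Rightarrow> zl" where
  "zl_of_int n = zl_norm (n, 0)"

definition zl_lambda :: zl where
  "zl_lambda = (0, 1)"

definition zl_pi :: zl where
  "zl_pi = zl_add zl_lambda (zl_of_int 2)"

definition zl_carrier :: "zl set" where
  "zl_carrier = {p. 0 \<le> fst p \<and> fst p < 5 \<and> 0 \<le> snd p \<and> snd p < 5}"

type_synonym mat2 = "zl \<times> zl \<times> zl \<times> zl"

definition mat_mul :: "mat2 \<Rightarrow> mat2 \<Rightarrow> mat2" where
  "mat_mul A B = (case A of (a11, a12, a21, a22) \<Rightarrow> case B of (b11, b12, b21, b22) \<Rightarrow>
     (zl_add (zl_mul a11 b11) (zl_mul a12 b21), zl_add (zl_mul a11 b12) (zl_mul a12 b22),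
      zl_add (zl_mul a21 b11) (zl_mul a22 b21), zl_add (zl_mul a21 b12) (zl_mul a22 b22)))"

definition mat_add :: "mat2 \<Rightarrow> mat2 \<Rightarrow> mat2" where
  "mat_add A B = (case A of (a11, a12, a21, a22) \<Rightarrow> case B of (b11, b12, b21, b22) \<Rightarrow>
     (zl_add a11 b11, zl_add a12 b12, zl_add a21 b21, zl_add a22 b22))"

definition mat_smult :: "zl \<Rightarrow> mat2 \<Rightarrow> mat2" where
  "mat_smult c A = (case A of (a11, a12, a21, a22) \<Rightarrow>
     (zl_mul c a11, zl_mul c a12, zl_mul c a21, zl_mul c a22))"

definition mat_of_ints :: "int \<Rightarrow> int \<Rightarrow> int \<Rightarrow> int \<Rightarrow> mat2" where
  "mat_of_ints x y z w = (zl_of_int x, zl_of_int y, zl_of_int z, zl_of_int w)"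

definition mat_one :: mat2 where
  "mat_one = mat_of_ints 1 0 0 1"

definition M2 :: "mat2 monoid" where
  "M2 = \<lparr>carrier = zl_carrier \<times> zl_carrier \<times> zl_carrier \<times> zl_carrier,
         mult = mat_mul, one = mat_one\<rparr>"

definition GL2 :: "mat2 monoid" where
  "GL2 = units_of M2"

definition gen_a :: mat2 where
  "gen_a = mat_add mat_one (mat_smult zl_pi (mat_of_ints 4 0 4 1))"
definition gen_b :: mat2 where
  "gen_b = mat_add mat_one (mat_smult zl_pi (mat_of_ints 1 1 0 4))"
definition gen_c :: mat2 where
  "gen_c = mat_add mat_one (mat_smult zl_pi (mat_of_ints 1 4 0 4))"

definition Delta :: "mat2 set" where
  "Delta = {gen_a, gen_b, gen_c}"

definition mat_S :: mat2 where
  "mat_S = mat_of_ints 0 1 (-1) 0"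
definition mat_T :: mat2 where
  "mat_T = (zl_of_int 1, zl_lambda, zl_of_int 0, zl_of_int 1)"
definition mat_J :: mat2 where
  "mat_J = mat_of_ints 0 1 1 0"

end

theory Submission
  imports Defs
begin

text \<open>Since pi^2 = lambda^2 + 4 lambda + 4 = 5 (lambda + 1) vanishes modulo 5, the map
  X \<mapsto> I + pi X is a homomorphism from the additive group of trace-zero 2x2 matrices over
  \<int>/5 into GL(2, \<int>[lambda]/5). The generators a, b, c are images of a basis, so
  \<langle>\<Delta>\<rangle> is the image, a 3-dimensional \<int>/5-vector space on which conjugation by S, T
  and J acts linearly; its subgroups are subspaces. The nilpotent map T - I followed by the
  coordinate swap J moves any nonzero vector onto a basis, so the action is irreducible.\<close>

text \<open>Q is a subset of (\<int>/m)^3 given on integer representatives; when nonempty it is a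
  subgroup.\<close>

locale mod_additive =
  fixes m :: int and Q :: "int \<Rightarrow> int \<Rightarrow> int \<Rightarrow> bool"
  assumes modulus_pos: "0 < m"
    and mod_cong: "\<And>x y z x' y' z'. Q x y z \<Longrightarrow> x mod m = x' mod m \<Longrightarrow> y mod m = y' mod m
      \<Longrightarrow> z mod m = z' mod m \<Longrightarrow> Q x' y' z'"
    and add_closed: "\<And>x y z x' y' z'. Q x y z \<Longrightarrow> Q x' y' z' \<Longrightarrow> Q (x + x') (y + y') (z + z')"
begin

lemma nat_smult_closed:
  assumes "0 < k" and "Q x y z"
  shows "Q (int k * x) (int k * y) (int k * z)"
  using assms(1)
proof (induction k rule: nat_induct_non_zero)
  case 1
  show ?case using assms(2) by simp
next
  case (Suc k)
  from add_closed[OF Suc.IH assms(2)] show ?case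
    by (simp add: algebra_simps)
qed

lemma smult_closed:
  assumes "Q x y z"
  shows "Q (k * x) (k * y) (k * z)"
proof -
  define k' where "k' = k mod m + m"
  have "0 < k'"
    using modulus_pos by (simp add: k'_def add_nonneg_pos)
  then have "Q (int (nat k') * x) (int (nat k') * y) (int (nat k') * z)"
    by (intro nat_smult_closed assms) simp
  then have "Q (k' * x) (k' * y) (k' * z)"
    using \<open>0 < k'\<close> by simp
  moreover have k'_mod: "k' * t mod m = k * t mod m" for t
    by (simp add: k'_def distrib_right mod_simps)
  ultimately show ?thesis
    by (rule mod_cong) (simp_all only: k'_mod)
qed

lemma diff_closed:
  assumes "Q x y z" and "Q x' y' z'"
  shows "Q (x - x') (y - y') (z - z')"
proof -
  have "Q (x + -1 * x') (y + -1 * y') (z + -1 * z')"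
    by (intro add_closed smult_closed assms)
  then show ?thesis
    by simp
qed

lemma all_if_basis:
  assumes "Q 1 0 0" and "Q 0 1 0" and "Q 0 0 1"
  shows "Q x y z"
proof -
  have "Q (x * 1 + y * 0 + z * 0) (x * 0 + y * 1 + z * 0) (x * 0 + y * 0 + z * 1)"
    by (intro add_closed smult_closed assms)
  then show ?thesis
    by simp
qed

end

lemma fermat_mod_5:
  assumes "(c::int) mod 5 \<noteq> 0"
  shows "c ^ 4 mod 5 = 1"
proof -
  have "c ^ 4 mod 5 = (c mod 5) ^ 4 mod 5"
    by (simp add: power_mod)
  moreover have "c mod 5 \<in> {1, 2, 3, 4}"
    using assms by auto
  ultimately show ?thesis
    by auto
qed

text \<open>The coordinate action of conjugation by T and J on I + pi X, cf. conj_T_pi_elt and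
  conj_J_pi_elt below.\<close>

locale TJ_invariant = mod_additive 5 Q for Q +
  assumes T_closed: "\<And>x y z. Q x y z \<Longrightarrow> Q (x + 3 * z) (y - x + z) z"
    and J_closed: "\<And>x y z. Q x y z \<Longrightarrow> Q (- x) z y"
begin

lemma T_minus_id_closed: "Q x y z \<Longrightarrow> Q (3 * z) (z - x) 0"
  using diff_closed[OF T_closed] by fastforce

lemma obtain_middle_axis:
  assumes "Q x y z" and "\<not> (x mod 5 = 0 \<and> y mod 5 = 0 \<and> z mod 5 = 0)"
  obtains c where "Q 0 c 0" and "c mod 5 \<noteq> 0"
proof -
  consider "z mod 5 \<noteq> 0" | "z mod 5 = 0" and "x mod 5 \<noteq> 0"
    | "z mod 5 = 0" and "x mod 5 = 0" and "y mod 5 \<noteq> 0"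
    using assms(2) by (cases "z mod 5 = 0"; cases "x mod 5 = 0") auto
  then show ?thesis
  proof cases
    case 1
    have "Q 0 (- 3 * z) 0"
      using T_minus_id_closed[OF T_minus_id_closed[OF assms(1)]] by simp
    moreover have "(- 3 * z) mod 5 \<noteq> 0"
      using 1 by presburger
    ultimately show ?thesis using that by blast
  next
    case 2
    have "Q 0 (z - x) 0"
      using T_minus_id_closed[OF assms(1)] by (rule mod_cong) (use 2 in presburger)+
    moreover have "(z - x) mod 5 \<noteq> 0"
      using 2 by presburger
    ultimately show ?thesis using that by blast
  next
    case 3
    have "Q 0 y 0"
      using assms(1) by (rule mod_cong) (use 3 in simp)+
    with 3 show ?thesis using that by blast
  qed
qed

lemma all_if_nonzero:
  assumes "Q x0 y0 z0" and "\<not> (x0 mod 5 = 0 \<and> y0 mod 5 = 0 \<and> z0 mod 5 = 0)"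
  shows "Q x y z"
proof -
  obtain c where c: "Q 0 c 0" "c mod 5 \<noteq> 0"
    using obtain_middle_axis[OF assms] .
  have "Q (c ^ 3 * 0) (c ^ 3 * c) (c ^ 3 * 0)"
    using c(1) by (rule smult_closed)
  then have e2: "Q 0 1 0"
    by (rule mod_cong) (simp_all add: fermat_mod_5[OF c(2), unfolded power4_eq_xxxx] power3_eq_cube)
  have e3: "Q 0 0 1"
    using J_closed[OF e2] by simp
  have "Q 3 0 0"
    using diff_closed[OF diff_closed[OF T_closed[OF e3] e2] e3] by simp
  then have "Q (2 * 3) (2 * 0) (2 * 0)"
    by (rule smult_closed)
  then have e1: "Q 1 0 0"
    by (rule mod_cong) simp_all
  show ?thesis
    using all_if_basis[OF e1 e2 e3] .
qed

end

lemma mod_5_eq_if_diff_multiple: "\<exists>k. (a::int) - b = 5 * k \<Longrightarrow> a mod 5 = b mod 5"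
  by (metis mod_eq_dvd_iff dvd_def)

lemmas mat2_entrywise =
  mat_mul_def zl_add_def zl_mul_def zl_norm_def prod.case fst_conv snd_conv prod.inject

lemma mat2_cases:
  obtains a1 a2 a3 a4 a5 a6 a7 a8 where "(A::mat2) = ((a1, a2), (a3, a4), (a5, a6), (a7, a8))"
  by (metis prod.collapse)

text \<open>After unfolding, each entry is an equation of integer polynomials in nested residues
  mod 5; rewriting every t mod 5 as t - 5 (t div 5) leaves an ideal membership problem that
  algebra decides.\<close>

lemma mat_mul_assoc: "mat_mul (mat_mul A B) C = mat_mul A (mat_mul B C)"
  unfolding mat_mul_def zl_add_def zl_mul_def zl_norm_def prod.case_eq_if
  by (simp only: fst_conv snd_conv prod_eq_iff; intro conjI; rule mod_5_eq_if_diff_multiple;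
      simp only: minus_div_mult_eq_mod[symmetric]; algebra)

lemma M2_simps [simp]:
  "carrier M2 = zl_carrier \<times> zl_carrier \<times> zl_carrier \<times> zl_carrier"
  "mult M2 = mat_mul" "one M2 = mat_one"
  by (simp_all add: M2_def)

lemma finite_zl_carrier: "finite zl_carrier"
proof (rule finite_subset)
  show "zl_carrier \<subseteq> {0..<5} \<times> {0..<5::int}"
    by (auto simp: zl_carrier_def)
qed simp

lemma mat_mul_in_carrier: "mat_mul A B \<in> carrier M2"
  by (cases A rule: mat2_cases; cases B rule: mat2_cases) (simp add: mat2_entrywise zl_carrier_def)

lemma mat_one_in_carrier: "mat_one \<in> carrier M2"
  by (simp add: mat_one_def mat_of_ints_def zl_of_int_def zl_norm_def zl_carrier_def)

lemma mat_mul_one_left: "A \<in> carrier M2 \<Longrightarrow> mat_mul mat_one A = A"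
  by (cases A rule: mat2_cases)
    (simp add: mat2_entrywise zl_carrier_def mat_one_def mat_of_ints_def zl_of_int_def)

lemma mat_mul_one_right: "A \<in> carrier M2 \<Longrightarrow> mat_mul A mat_one = A"
  by (cases A rule: mat2_cases)
    (simp add: mat2_entrywise zl_carrier_def mat_one_def mat_of_ints_def zl_of_int_def)

lemma monoid_M2: "monoid M2"
  by (rule monoidI)
    (simp_all add: mat_mul_in_carrier mat_one_in_carrier mat_mul_assoc mat_mul_one_left
      mat_mul_one_right del: M2_simps(1))

lemma group_GL2: "group GL2"
  unfolding GL2_def by (rule monoid.units_group[OF monoid_M2])

lemma GL2_simps: "carrier GL2 = Units M2" "mult GL2 = mat_mul" "one GL2 = mat_one"
  by (simp_all add: GL2_def units_of_def)

lemma GL2_inverseI: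
  assumes "A \<in> carrier M2" and "B \<in> carrier M2"
    and "mat_mul A B = mat_one" and "mat_mul B A = mat_one"
  shows "A \<in> carrier GL2" and "inv\<^bsub>GL2\<^esub> A = B"
proof -
  show A: "A \<in> carrier GL2"
    using assms by (auto simp: Units_def GL2_simps)
  have B: "B \<in> carrier GL2"
    using assms by (auto simp: Units_def GL2_simps)
  show "inv\<^bsub>GL2\<^esub> A = B"
    using group.inv_equality[OF group_GL2 _ A B] assms(4) by (simp add: GL2_simps)
qed

definition pi_elt :: "int \<Rightarrow> int \<Rightarrow> int \<Rightarrow> mat2" where
  "pi_elt x y z = mat_add mat_one (mat_smult zl_pi (mat_of_ints x y z (- x)))"

lemma pi_elt_explicit:
  "pi_elt x y z = (((1 + 2 * x) mod 5, x mod 5), ((2 * y) mod 5, y mod 5),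
                   ((2 * z) mod 5, z mod 5), ((1 - 2 * x) mod 5, (- x) mod 5))"
  by (simp add: pi_elt_def mat_add_def mat_smult_def mat_one_def mat_of_ints_def zl_of_int_def
      zl_pi_def zl_lambda_def zl_add_def zl_mul_def zl_norm_def mod_simps)

lemma pi_elt_mod_cong:
  assumes "x mod 5 = x' mod 5" and "y mod 5 = y' mod 5" and "z mod 5 = z' mod 5"
  shows "pi_elt x y z = pi_elt x' y' z'"
proof -
  have "pi_elt x y z = pi_elt (x mod 5) (y mod 5) (z mod 5)" for x y z
    unfolding pi_elt_explicit
    by (simp only: prod.inject; intro conjI; rule mod_5_eq_if_diff_multiple;
        simp only: minus_div_mult_eq_mod[symmetric]; algebra)
  then show ?thesis
    using assms by metis
qed

lemma pi_elt_zero: "pi_elt 0 0 0 = mat_one"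
  by (simp add: pi_elt_explicit mat_one_def mat_of_ints_def zl_of_int_def zl_norm_def)

lemma pi_elt_in_carrier: "pi_elt x y z \<in> carrier M2"
  by (simp add: pi_elt_explicit zl_carrier_def)

text \<open>The additivity of pi_elt is the identity pi^2 = 0 in \<int>[lambda]/5.\<close>

lemma mat_mul_pi_elt: "mat_mul (pi_elt x y z) (pi_elt x' y' z') = pi_elt (x + x') (y + y') (z + z')"
  unfolding pi_elt_explicit
  by (simp only: mat2_entrywise; intro conjI; rule mod_5_eq_if_diff_multiple;
      simp only: minus_div_mult_eq_mod[symmetric]; algebra)

lemma pi_elt_in_GL2: "pi_elt x y z \<in> carrier GL2"
  and inv_pi_elt: "inv\<^bsub>GL2\<^esub> (pi_elt x y z) = pi_elt (- x) (- y) (- z)"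
  using GL2_inverseI[OF pi_elt_in_carrier[of x y z] pi_elt_in_carrier[of "- x" "- y" "- z"]]
  by (simp_all add: mat_mul_pi_elt pi_elt_zero)

lemma Delta_eq: "Delta = {pi_elt 4 0 4, pi_elt 1 1 0, pi_elt 1 4 0}"
  by (simp add: Delta_def gen_a_def gen_b_def gen_c_def pi_elt_def mat_of_ints_def zl_of_int_def
      zl_norm_def)

lemma mat_S_in_GL2: "mat_S \<in> carrier GL2"
  and inv_mat_S: "inv\<^bsub>GL2\<^esub> mat_S = mat_of_ints 0 (- 1) 1 0"
  using GL2_inverseI[of mat_S "mat_of_ints 0 (- 1) 1 0"]
  by (simp_all add: mat_S_def mat_of_ints_def zl_of_int_def zl_carrier_def
      mat2_entrywise mat_one_def)

lemma mat_T_in_GL2: "mat_T \<in> carrier GL2"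
  and inv_mat_T: "inv\<^bsub>GL2\<^esub> mat_T = (zl_of_int 1, (0, 4), zl_of_int 0, zl_of_int 1)"
  using GL2_inverseI[of mat_T "(zl_of_int 1, (0, 4), zl_of_int 0, zl_of_int 1)"]
  by (simp_all add: mat_T_def zl_lambda_def mat_of_ints_def zl_of_int_def
      zl_carrier_def mat2_entrywise mat_one_def)

lemma mat_J_in_GL2: "mat_J \<in> carrier GL2"
  and inv_mat_J: "inv\<^bsub>GL2\<^esub> mat_J = mat_J"
  using GL2_inverseI[of mat_J mat_J]
  by (simp_all add: mat_J_def mat_of_ints_def zl_of_int_def zl_carrier_def
      mat2_entrywise mat_one_def)

lemma conj_S_pi_elt: "mat_S \<otimes>\<^bsub>GL2\<^esub> pi_elt x y z \<otimes>\<^bsub>GL2\<^esub> inv\<^bsub>GL2\<^esub> mat_S = pi_elt (- x) (- z) (- y)"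
  unfolding inv_mat_S unfolding GL2_simps pi_elt_explicit mat_S_def mat_of_ints_def zl_of_int_def
  by (simp only: mat2_entrywise; intro conjI; rule mod_5_eq_if_diff_multiple;
      simp only: minus_div_mult_eq_mod[symmetric]; algebra)

lemma conj_T_pi_elt:
  "mat_T \<otimes>\<^bsub>GL2\<^esub> pi_elt x y z \<otimes>\<^bsub>GL2\<^esub> inv\<^bsub>GL2\<^esub> mat_T = pi_elt (x + 3 * z) (y - x + z) z"
  unfolding inv_mat_T unfolding GL2_simps pi_elt_explicit mat_T_def zl_lambda_def zl_of_int_def
  by (simp only: mat2_entrywise; intro conjI; rule mod_5_eq_if_diff_multiple;
      simp only: minus_div_mult_eq_mod[symmetric]; algebra)

lemma conj_J_pi_elt: "mat_J \<otimes>\<^bsub>GL2\<^esub> pi_elt x y z \<otimes>\<^bsub>GL2\<^esub> inv\<^bsub>GL2\<^esub> mat_J = pi_elt (- x) z y"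
  unfolding inv_mat_J unfolding GL2_simps pi_elt_explicit mat_J_def mat_of_ints_def zl_of_int_def
  by (simp only: mat2_entrywise; intro conjI; rule mod_5_eq_if_diff_multiple;
      simp only: minus_div_mult_eq_mod[symmetric]; algebra)

lemma (in group) conj_image_eq_if_subset:
  assumes "finite A" and "A \<subseteq> carrier G" and "g \<in> carrier G"
    and "(\<lambda>h. g \<otimes> h \<otimes> inv g) ` A \<subseteq> A"
  shows "(\<lambda>h. g \<otimes> h \<otimes> inv g) ` A = A"
proof (rule endo_inj_surj[OF assms(1,4)])
  show "inj_on (\<lambda>h. g \<otimes> h \<otimes> inv g) A"
    using assms(2,3)
    by (intro inj_onI) (metis Units_eq Units_l_cancel inv_closed m_closed right_cancel subsetD)
qed

definition pi_elts :: "mat2 set" where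
  "pi_elts = {pi_elt x y z | x y z. True}"

lemma pi_elt_in_pi_elts [simp]: "pi_elt x y z \<in> pi_elts"
  unfolding pi_elts_def by blast

lemma pi_eltsE:
  assumes "h \<in> pi_elts"
  obtains x y z where "h = pi_elt x y z"
  using assms unfolding pi_elts_def by blast

lemma subgroup_pi_elts: "subgroup pi_elts GL2"
proof (rule group.subgroupI[OF group_GL2])
  show "pi_elts \<subseteq> carrier GL2"
    using pi_elt_in_GL2 by (auto elim: pi_eltsE)
  show "pi_elts \<noteq> {}"
    using pi_elt_in_pi_elts by blast
  show "inv\<^bsub>GL2\<^esub> h \<in> pi_elts" if "h \<in> pi_elts" for h
    using that by (auto simp: inv_pi_elt elim: pi_eltsE)
  show "h \<otimes>\<^bsub>GL2\<^esub> k \<in> pi_elts" if "h \<in> pi_elts" and "k \<in> pi_elts" for h k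
    using that by (auto simp: GL2_simps mat_mul_pi_elt elim!: pi_eltsE)
qed

lemma finite_pi_elts: "finite pi_elts"
proof (rule finite_subset)
  show "pi_elts \<subseteq> carrier M2"
    using pi_elt_in_carrier by (auto simp del: M2_simps elim: pi_eltsE)
  show "finite (carrier M2)"
    by (simp add: finite_zl_carrier)
qed

lemma mod_additive_pi_elt_subgroup:
  assumes "subgroup H GL2"
  shows "mod_additive 5 (\<lambda>x y z. pi_elt x y z \<in> H)"
proof
  fix x y z x' y' z' :: int
  show "pi_elt x' y' z' \<in> H" if "pi_elt x y z \<in> H"
    and "x mod 5 = x' mod 5" and "y mod 5 = y' mod 5" and "z mod 5 = z' mod 5"
    using that pi_elt_mod_cong by metis
  show "pi_elt (x + x') (y + y') (z + z') \<in> H" if "pi_elt x y z \<in> H" and "pi_elt x' y' z' \<in> H"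
    using subgroup.m_closed[OF assms that] by (simp add: GL2_simps mat_mul_pi_elt)
qed simp

lemma generate_Delta: "generate GL2 Delta = pi_elts"
proof
  show "generate GL2 Delta \<subseteq> pi_elts"
    by (rule group.generate_subgroup_incl[OF group_GL2 _ subgroup_pi_elts])
      (simp add: Delta_eq)
  have "subgroup (generate GL2 Delta) GL2"
    using group.generate_is_subgroup[OF group_GL2] pi_elt_in_GL2 by (simp add: Delta_eq)
  then interpret mod_additive 5 "\<lambda>x y z. pi_elt x y z \<in> generate GL2 Delta"
    by (rule mod_additive_pi_elt_subgroup)
  have a: "pi_elt 4 0 4 \<in> generate GL2 Delta" and b: "pi_elt 1 1 0 \<in> generate GL2 Delta"
    and c: "pi_elt 1 4 0 \<in> generate GL2 Delta"
    using generate.incl[of _ Delta GL2] by (auto simp: Delta_eq)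
  have "pi_elt (3 * 1 + 3 * 1) (3 * 1 + 3 * 4) (3 * 0 + 3 * 0) \<in> generate GL2 Delta"
    by (intro add_closed smult_closed b c)
  then have e1: "pi_elt 1 0 0 \<in> generate GL2 Delta"
    by (rule mod_cong) simp_all
  have "pi_elt (3 * 1 + 12 * 1) (3 * 1 + 12 * 4) (3 * 0 + 12 * 0) \<in> generate GL2 Delta"
    by (intro add_closed smult_closed b c)
  then have e2: "pi_elt 0 1 0 \<in> generate GL2 Delta"
    by (rule mod_cong) simp_all
  have "pi_elt (4 * 4 + 4 * 1) (4 * 0 + 4 * 0) (4 * 4 + 4 * 0) \<in> generate GL2 Delta"
    by (intro add_closed smult_closed a e1)
  then have e3: "pi_elt 0 0 1 \<in> generate GL2 Delta"
    by (rule mod_cong) simp_all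
  show "pi_elts \<subseteq> generate GL2 Delta"
    using all_if_basis[OF e1 e2 e3] by (auto elim: pi_eltsE)
qed

lemma conj_pi_elts:
  assumes "g \<in> {mat_S, mat_T, mat_J}"
  shows "(\<lambda>h. g \<otimes>\<^bsub>GL2\<^esub> h \<otimes>\<^bsub>GL2\<^esub> inv\<^bsub>GL2\<^esub> g) ` pi_elts = pi_elts"
proof (rule group.conj_image_eq_if_subset[OF group_GL2 finite_pi_elts])
  show "pi_elts \<subseteq> carrier GL2"
    by (rule subgroup.subset[OF subgroup_pi_elts])
  show "g \<in> carrier GL2"
    using assms mat_S_in_GL2 mat_T_in_GL2 mat_J_in_GL2 by blast
  show "(\<lambda>h. g \<otimes>\<^bsub>GL2\<^esub> h \<otimes>\<^bsub>GL2\<^esub> inv\<^bsub>GL2\<^esub> g) ` pi_elts \<subseteq> pi_elts"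
    using assms by (auto simp: conj_S_pi_elt conj_T_pi_elt conj_J_pi_elt elim!: pi_eltsE)
qed

lemma invariant_subgroup_eq_pi_elts:
  assumes "subgroup H GL2" and "H \<subseteq> pi_elts" and "H \<noteq> {\<one>\<^bsub>GL2\<^esub>}"
    and "\<forall>g\<in>{mat_S, mat_T, mat_J}. (\<lambda>h. g \<otimes>\<^bsub>GL2\<^esub> h \<otimes>\<^bsub>GL2\<^esub> inv\<^bsub>GL2\<^esub> g) ` H = H"
  shows "H = pi_elts"
proof -
  have conj_closed: "g \<otimes>\<^bsub>GL2\<^esub> h \<otimes>\<^bsub>GL2\<^esub> inv\<^bsub>GL2\<^esub> g \<in> H"
    if "g \<in> {mat_S, mat_T, mat_J}" and "h \<in> H" for g h
    using assms(4) that by blast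
  interpret mod_additive 5 "\<lambda>x y z. pi_elt x y z \<in> H"
    using assms(1) by (rule mod_additive_pi_elt_subgroup)
  interpret TJ_invariant "\<lambda>x y z. pi_elt x y z \<in> H"
  proof
    fix x y z :: int
    assume h: "pi_elt x y z \<in> H"
    show "pi_elt (x + 3 * z) (y - x + z) z \<in> H"
      using conj_closed[OF _ h, of mat_T] by (simp add: conj_T_pi_elt)
    show "pi_elt (- x) z y \<in> H"
      using conj_closed[OF _ h, of mat_J] by (simp add: conj_J_pi_elt)
  qed
  have "mat_one \<in> H" and "H \<noteq> {mat_one}"
    using subgroup.one_closed[OF assms(1)] assms(3) by (simp_all add: GL2_simps)
  then obtain h where "h \<in> H" and "h \<noteq> pi_elt 0 0 0"
    unfolding pi_elt_zero by blast
  moreover obtain x y z where h: "h = pi_elt x y z"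
    using \<open>h \<in> H\<close> assms(2) by (blast elim: pi_eltsE)
  ultimately have "\<not> (x mod 5 = 0 \<and> y mod 5 = 0 \<and> z mod 5 = 0)"
    using pi_elt_mod_cong[of x 0 y 0 z 0] by auto
  then have "pi_elt x' y' z' \<in> H" for x' y' z'
    using all_if_nonzero \<open>h \<in> H\<close> h by blast
  then show ?thesis
    using assms(2) by (auto elim: pi_eltsE)
qed

theorem lemmaB1:
  "(\<forall>g\<in>{mat_S, mat_T, mat_J}.
      (\<lambda>h. g \<otimes>\<^bsub>GL2\<^esub> h \<otimes>\<^bsub>GL2\<^esub> inv\<^bsub>GL2\<^esub> g) ` generate GL2 Delta = generate GL2 Delta) \<and>
   (\<forall>H. subgroup H GL2 \<and> H \<subseteq> generate GL2 Delta \<and> H \<noteq> {\<one>\<^bsub>GL2\<^esub>} \<and>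
       (\<forall>g\<in>{mat_S, mat_T, mat_J}.
          (\<lambda>h. g \<otimes>\<^bsub>GL2\<^esub> h \<otimes>\<^bsub>GL2\<^esub> inv\<^bsub>GL2\<^esub> g) ` H = H)
     \<longrightarrow> H = generate GL2 Delta)"
  unfolding generate_Delta using conj_pi_elts invariant_subgroup_eq_pi_elts by blast

end
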